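(* Let $S$ be a $k$-dimensional subspace of $\mathbb{R}^n$ with orthogonal projection $P_S$, let $B$ be a real symmetric $n\times n$ matrix, $l\in\mathbb{R}$, $\delta_L>0$, $t>0$, and $Y=vv^T$ with $v\in\mathbb{R}^n$. Suppose $\lambda_{\min}(B|_S)>l+\delta_L$. Define $$L_B=\frac{\bigl(P_S(B-(l+\delta_L)I)P_S\bigr)^{\dagger 2}}{\Phi_{l+\delta_L}(B)-\Phi_l(B)}-\bigl(P_S(B-(l+\delta_L)I)P_S\bigr)^{\dagger}.$$ If $L_B\bullet Y\ge 1/t$, then $\Phi_{l+\delta_L}(B+tY)\le\Phi_l(B)$ and $\lambda_{\min}((B+tY)|_S)>l+\delta_L$.
   Context: $B|_S$ denotes the restriction (compression) of $B$ to $S$, i.e. the $k\times k$ matrix of the quadratic form $x\mapsto x^TBx$ on $S$ in an orthonormal basis of $S$; its eigenvalues are $\lambda_1(B|_S)\le\dots\le\lambda_k(B|_S)$. For $l<\lambda_{\min}(B|_S)$, the lower potential is $\Phi_l(B)=\operatorname{Tr}\bigl((P_S(B-lI)P_S)^\dagger\bigr)=\sum_{i=1}^k\frac{1}{\lambda_i(B|_S)-l}$. $A^\dagger$ is the Moore–Penrose pseudoinverse, $A^{\dagger2}=(A^\dagger)^2$, and $C\bullet D=\operatorname{Tr}(C^TD)$. *)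

theory Defs
  imports "HOL-Analysis.Analysis"
begin

definition proj_mat :: "(real^'n) set \<Rightarrow> real^'n^'n" where
  "proj_mat S = (THE P. \<forall>x. P *v x \<in> S \<and> (\<forall>y\<in>S. (x - P *v x) \<bullet> y = 0))"

definition pinv :: "real^'n^'n \<Rightarrow> real^'n^'n" where
  "pinv A = (THE X. A ** X ** A = A \<and> X ** A ** X = X \<and>
                    transpose (A ** X) = A ** X \<and> transpose (X ** A) = X ** A)"

text \<open>Eigenvalues of the compression B|_S, viewed as the operator P_S B on S.\<close>
definition compr_eigenvalues :: "(real^'n) set \<Rightarrow> real^'n^'n \<Rightarrow> real set" where
  "compr_eigenvalues S B =
     {\<mu>. \<exists>x\<in>S. x \<noteq> 0 \<and> proj_mat S *v (B *v x) = \<mu> *\<^sub>R x}"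

definition lambda_min_restr :: "(real^'n) set \<Rightarrow> real^'n^'n \<Rightarrow> real" where
  "lambda_min_restr S B = Min (compr_eigenvalues S B)"

definition lower_pot :: "(real^'n) set \<Rightarrow> real \<Rightarrow> real^'n^'n \<Rightarrow> real" where
  "lower_pot S l B =
     trace (pinv (proj_mat S ** (B - l *\<^sub>R mat 1) ** proj_mat S))"

definition frob :: "real^'n^'n \<Rightarrow> real^'n^'n \<Rightarrow> real" (infixl "\<bullet>\<^sub>F" 70) where
  "C \<bullet>\<^sub>F D = trace (transpose C ** D)"

definition outer :: "real^'n \<Rightarrow> real^'n^'n" where
  "outer v = (\<chi> i j. v $ i * v $ j)"

end

theory Submission
  imports Defs
begin

text \<open>Write \<open>P = P\<^sub>S\<close>, \<open>l' = l + \<delta>\<^sub>L\<close> and \<open>A = P (B - l' I) P\<close>. Since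
  \<open>\<lambda>\<^sub>m\<^sub>i\<^sub>n(B|\<^sub>S) > l'\<close>, the form of \<open>B - l' I\<close> is positive definite on \<open>S\<close>, so
  \<open>M = A\<^sup>\<dagger>\<close> is the inverse of \<open>A\<close> on \<open>S\<close>: \<open>A M = M A = P\<close>. With \<open>w = P v\<close> the
  compression of \<open>B + t v v\<^sup>T - l' I\<close> is \<open>A + t w w\<^sup>T\<close>, whose pseudoinverse is given by the
  Sherman--Morrison formula \<open>M - s z z\<^sup>T\<close> with \<open>z = M v\<close> and \<open>s = t / (1 + t v\<^sup>T M v)\<close>.
  Hence \<open>\<Phi>\<^sub>l\<^sub>'(B + t Y) = \<Phi>\<^sub>l\<^sub>'(B) - s |z|\<^sup>2\<close>, and the hypothesis
  \<open>L\<^sub>B \<bullet> Y = |z|\<^sup>2 / \<Delta> - v\<^sup>T M v \<ge> 1/t\<close>, where \<open>\<Delta> = \<Phi>\<^sub>l\<^sub>'(B) - \<Phi>\<^sub>l(B)\<close>,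
  rearranges to \<open>\<Delta> \<le> s |z|\<^sup>2\<close>. The eigenvalue bound holds because the smallest eigenvalue of the
  compression is the minimum of the Rayleigh quotient on \<open>S\<close>, which a positive
  semidefinite rank-one update can only increase.\<close>

lemma symmetric_matrix_inner_commute:
  fixes C :: "real^'n^'n"
  assumes "transpose C = C"
  shows "x \<bullet> (C *v y) = (C *v x) \<bullet> y"
proof -
  have "x \<bullet> (C *v y) = (transpose C *v x) \<bullet> y" by (simp add: dot_lmul_matrix)
  then show ?thesis using assms by simp
qed

lemma matrix_diff_ldistrib: "(A::real^'n^'n) ** (B - C) = A ** B - A ** C"
  unfolding matrix_eq by (simp add: matrix_vector_mul_assoc[symmetric] algebra_simps)

lemma matrix_diff_rdistrib: "((A::real^'n^'n) - B) ** C = A ** C - B ** C"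
  unfolding matrix_eq by (simp add: matrix_vector_mul_assoc[symmetric] algebra_simps)

lemma matrix_add_rdistrib: "((A::real^'n^'n) + B) ** C = A ** C + B ** C"
  unfolding matrix_eq by (simp add: matrix_vector_mul_assoc[symmetric] algebra_simps)

lemma transpose_add: "transpose ((A::real^'n^'m) + B) = transpose A + transpose B"
  by (simp add: vec_eq_iff transpose_def)

lemma transpose_diff: "transpose ((A::real^'n^'m) - B) = transpose A - transpose B"
  by (simp add: vec_eq_iff transpose_def)

lemma trace_scaleR: "trace (k *\<^sub>R (A::real^'n^'n)) = k * trace A"
  by (simp add: trace_def sum_distrib_left)

lemma outer_mult_vec: "outer v *v x = (v \<bullet> x) *\<^sub>R v"
proof -
  have "(outer v *v x) $ i = v $ i * (\<Sum>j\<in>UNIV. v $ j * x $ j)" for i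
    by (simp add: outer_def matrix_vector_mult_def mult.assoc sum_distrib_left)
  then show ?thesis by (simp add: vec_eq_iff inner_vec_def)
qed

lemma transpose_outer: "transpose (outer v) = outer v"
  by (simp add: vec_eq_iff transpose_def outer_def mult.commute)

lemma trace_outer: "trace (outer v) = v \<bullet> v"
  by (simp add: trace_def outer_def inner_vec_def)

lemma frob_outer: "L \<bullet>\<^sub>F outer v = v \<bullet> (L *v v)"
proof -
  have "L \<bullet>\<^sub>F outer v = (\<Sum>i\<in>UNIV. \<Sum>k\<in>UNIV. L $ k $ i * (v $ k * v $ i))"
    by (simp add: frob_def trace_def matrix_matrix_mult_def transpose_def outer_def)
  also have "\<dots> = (\<Sum>k\<in>UNIV. \<Sum>i\<in>UNIV. v $ k * (L $ k $ i * v $ i))"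
    by (subst sum.swap) (simp add: mult_ac)
  also have "\<dots> = v \<bullet> (L *v v)"
    by (simp add: inner_vec_def matrix_vector_mult_def sum_distrib_left)
  finally show ?thesis .
qed

lemma frob_barrier_outer:
  fixes M :: "real^'n^'n"
  assumes "transpose M = M"
  shows "((1 / D) *\<^sub>R (M ** M) - M) \<bullet>\<^sub>F outer v
           = (1 / D) * ((M *v v) \<bullet> (M *v v)) - v \<bullet> (M *v v)"
  using symmetric_matrix_inner_commute[OF assms, of v "M *v v"]
  by (simp add: frob_outer matrix_vector_mult_diff_rdistrib inner_diff_right
      scaleR_matrix_vector_assoc[symmetric] matrix_vector_mul_assoc[symmetric])

section \<open>Pseudoinverses\<close>

definition penrose_inverse :: "real^'n^'n \<Rightarrow> real^'n^'n \<Rightarrow> bool" where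
  "penrose_inverse A X \<longleftrightarrow> A ** X ** A = A \<and> X ** A ** X = X \<and>
     transpose (A ** X) = A ** X \<and> transpose (X ** A) = X ** A"

lemma penrose_inverse_unique:
  assumes "penrose_inverse A X" "penrose_inverse A Y"
  shows "X = Y"
proof -
  have x1: "A ** X ** A = A" and x2: "X ** A ** X = X" and x3: "transpose (A ** X) = A ** X"
    and x4: "transpose (X ** A) = X ** A" using assms(1) unfolding penrose_inverse_def by auto
  have y1: "A ** Y ** A = A" and y2: "Y ** A ** Y = Y" and y3: "transpose (A ** Y) = A ** Y"
    and y4: "transpose (Y ** A) = Y ** A" using assms(2) unfolding penrose_inverse_def by auto
  have tA_right: "transpose A = transpose A ** (A ** Y)"
    using arg_cong[OF y1, of transpose] y3 by (simp add: matrix_transpose_mul)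
  have tA_left: "transpose A = (X ** A) ** transpose A"
    using arg_cong[OF x1, of transpose] x4 by (simp add: matrix_transpose_mul matrix_mul_assoc)
  have "X = X ** transpose (A ** X)" using x2 x3 by (simp add: matrix_mul_assoc)
  also have "\<dots> = X ** transpose X ** (transpose A ** (A ** Y))"
    using tA_right by (simp add: matrix_transpose_mul matrix_mul_assoc)
  also have "\<dots> = X ** transpose (A ** X) ** A ** Y"
    by (simp add: matrix_transpose_mul matrix_mul_assoc)
  also have "\<dots> = X ** A ** Y" using x2 x3 by (simp add: matrix_mul_assoc)
  finally have X: "X = X ** A ** Y" .
  have "Y = transpose (Y ** A) ** Y" using y2 y4 by simp
  also have "\<dots> = (X ** A) ** transpose A ** transpose Y ** Y"
    using tA_left by (simp add: matrix_transpose_mul)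
  also have "\<dots> = X ** A ** transpose (Y ** A) ** Y"
    by (simp add: matrix_transpose_mul matrix_mul_assoc)
  also have "\<dots> = X ** A ** Y" using y2 y4 by (metis matrix_mul_assoc)
  finally show ?thesis using X by simp
qed

lemma pinv_eqI:
  assumes "penrose_inverse A X"
  shows "pinv A = X"
  unfolding pinv_def
proof (rule the_equality)
  show "A ** X ** A = A \<and> X ** A ** X = X \<and> transpose (A ** X) = A ** X \<and>
        transpose (X ** A) = X ** A"
    using assms unfolding penrose_inverse_def .
next
  fix Y assume "A ** Y ** A = A \<and> Y ** A ** Y = Y \<and> transpose (A ** Y) = A ** Y \<and>
                transpose (Y ** A) = Y ** A"
  then show "Y = X" using penrose_inverse_unique assms unfolding penrose_inverse_def by blast
qed

text \<open>Here \<open>P\<close> plays the role of the orthogonal projection onto the range of \<open>A\<close>.\<close>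

lemma pinv_eq_inverse_on_range:
  fixes A X P :: "real^'n^'n"
  assumes "A ** X = P" "X ** A = P" "P ** A = A" "P ** X = X" "transpose P = P"
  shows "pinv A = X"
  by (rule pinv_eqI) (simp add: penrose_inverse_def assms)

lemma transpose_inverse_on_range:
  fixes A X P :: "real^'n^'n"
  assumes "transpose A = A" "transpose P = P" "A ** X = P" "P ** X = X"
  shows "transpose X = X"
proof -
  have tXA: "transpose X ** A = P" and tXP: "transpose X ** P = transpose X"
    using arg_cong[OF assms(3), of transpose] arg_cong[OF assms(4), of transpose] assms(1,2)
    by (simp_all add: matrix_transpose_mul)
  have "transpose X = transpose X ** (A ** X)" using tXP assms(3) by simp
  also have "\<dots> = (transpose X ** A) ** X" by (simp add: matrix_mul_assoc)
  finally show ?thesis using tXA assms(4) by simp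
qed

lemma pinv_rank_one_update:
  fixes A M P :: "real^'n^'n"
  assumes symA: "transpose A = A" and symM: "transpose M = M"
    and AM: "A ** M = P" and MA: "M ** A = P" and PA: "P ** A = A" and PM: "P ** M = M"
    and symP: "transpose P = P" and Pw: "P *v w = w"
    and nonsing: "1 + t * (w \<bullet> (M *v w)) \<noteq> 0"
  shows "pinv (A + t *\<^sub>R outer w) = M - (t / (1 + t * (w \<bullet> (M *v w)))) *\<^sub>R outer (M *v w)"
proof -
  define z where "z = M *v w"
  define s where "s = t / (1 + t * (w \<bullet> z))"
  have s: "t - s * (1 + t * (w \<bullet> z)) = 0" using nonsing unfolding s_def z_def by simp
  have Az: "A *v z = w" using AM Pw by (simp add: z_def matrix_vector_mul_assoc)
  have Pz: "P *v z = z" using PM by (simp add: z_def matrix_vector_mul_assoc)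
  have w_M: "w \<bullet> (M *v x) = z \<bullet> x" for x
    using symmetric_matrix_inner_commute[OF symM] z_def by simp
  have z_A: "z \<bullet> (A *v x) = w \<bullet> x" for x
    using symmetric_matrix_inner_commute[OF symA] Az by simp
  have A2: "(A + t *\<^sub>R outer w) *v x = A *v x + (t * (w \<bullet> x)) *\<^sub>R w" for x
    by (simp add: matrix_vector_mult_add_rdistrib scaleR_matrix_vector_assoc[symmetric] outer_mult_vec)
  have M2: "(M - s *\<^sub>R outer z) *v x = M *v x - (s * (z \<bullet> x)) *\<^sub>R z" for x
    by (simp add: matrix_vector_mult_diff_rdistrib scaleR_matrix_vector_assoc[symmetric] outer_mult_vec)
  have mv: "\<And>X Y x. (X ** Y) *v x = X *v (Y *v x)" by (simp add: matrix_vector_mul_assoc)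
  have "(A + t *\<^sub>R outer w) ** (M - s *\<^sub>R outer z) = P"
  proof -
    have AMx: "A *v (M *v x) = P *v x" for x using AM by (simp add: mv[symmetric])
    have "(A + t *\<^sub>R outer w) *v ((M - s *\<^sub>R outer z) *v x)
            = P *v x + ((t - s * (1 + t * (w \<bullet> z))) * (z \<bullet> x)) *\<^sub>R w" for x
      unfolding M2 A2
      by (simp add: AMx Az w_M matrix_vector_mult_diff_distrib inner_diff_right algebra_simps)
    then show ?thesis using s by (simp add: matrix_eq mv)
  qed
  moreover have "(M - s *\<^sub>R outer z) ** (A + t *\<^sub>R outer w) = P"
  proof -
    have MAx: "M *v (A *v x) = P *v x" for x using MA by (simp add: mv[symmetric])
    have "(M - s *\<^sub>R outer z) *v ((A + t *\<^sub>R outer w) *v x)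
            = P *v x + ((t - s * (1 + t * (w \<bullet> z))) * (w \<bullet> x)) *\<^sub>R z" for x
      unfolding A2 M2
      by (simp add: MAx z_A z_def[symmetric] matrix_vector_right_distrib inner_add_right
          inner_commute algebra_simps)
    then show ?thesis using s by (simp add: matrix_eq mv)
  qed
  moreover have "P ** (A + t *\<^sub>R outer w) = A + t *\<^sub>R outer w"
    using PA Pw by (simp add: matrix_eq mv A2 matrix_vector_right_distrib matrix_vector_mult_scaleR)
  moreover have "P ** (M - s *\<^sub>R outer z) = M - s *\<^sub>R outer z"
    using PM Pz by (simp add: matrix_eq mv M2 matrix_vector_mult_diff_distrib matrix_vector_mult_scaleR)
  ultimately show ?thesis
    using pinv_eq_inverse_on_range symP unfolding s_def z_def by blast
qed

section \<open>Orthogonal projection onto a subspace\<close>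

lemma orthogonal_projection_unique:
  fixes S :: "(real^'n) set"
  assumes "subspace S" "y1 \<in> S" "\<forall>w\<in>S. (x - y1) \<bullet> w = 0" "y2 \<in> S" "\<forall>w\<in>S. (x - y2) \<bullet> w = 0"
  shows "y1 = y2"
proof -
  have "y1 - y2 \<in> S" using assms by (simp add: subspace_diff)
  moreover have "(y1 - y2) \<bullet> (y1 - y2) = (x - y2) \<bullet> (y1 - y2) - (x - y1) \<bullet> (y1 - y2)"
    by (simp add: algebra_simps)
  ultimately show ?thesis using assms by simp
qed

lemma orthogonal_projection_matrix_exists:
  fixes S :: "(real^'n) set"
  assumes S: "subspace S"
  shows "\<exists>P::real^'n^'n. \<forall>x. P *v x \<in> S \<and> (\<forall>y\<in>S. (x - P *v x) \<bullet> y = 0)"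
proof -
  have "\<exists>y. y \<in> S \<and> (\<forall>w\<in>S. (x - y) \<bullet> w = 0)" for x
  proof -
    obtain y z where "y \<in> span S" "\<And>w. w \<in> span S \<Longrightarrow> orthogonal z w" "x = y + z"
      using orthogonal_subspace_decomp_exists by blast
    moreover have "span S = S" using S by simp
    ultimately show ?thesis by (intro exI[of _ y]) (auto simp: orthogonal_def)
  qed
  then obtain p where p: "\<And>x. p x \<in> S \<and> (\<forall>w\<in>S. (x - p x) \<bullet> w = 0)" by metis
  have "p (a + b) = p a + p b" for a b
  proof (rule orthogonal_projection_unique[OF S, of _ "a + b"])
    show "p a + p b \<in> S" using p S by (simp add: subspace_add)
    show "\<forall>w\<in>S. (a + b - (p a + p b)) \<bullet> w = 0"
    proof
      fix w assume "w \<in> S"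
      then have "(a - p a) \<bullet> w = 0" "(b - p b) \<bullet> w = 0" using p by auto
      moreover have "a + b - (p a + p b) = (a - p a) + (b - p b)" by simp
      ultimately show "(a + b - (p a + p b)) \<bullet> w = 0" by (simp only: inner_add_left)
    qed
  qed (use p in auto)
  moreover have "p (c *\<^sub>R a) = c *\<^sub>R p a" for c a
  proof (rule orthogonal_projection_unique[OF S, of _ "c *\<^sub>R a"])
    show "c *\<^sub>R p a \<in> S" using p S by (simp add: subspace_scale)
    show "\<forall>w\<in>S. (c *\<^sub>R a - c *\<^sub>R p a) \<bullet> w = 0"
      using p by (simp flip: scaleR_diff_right)
  qed (use p in auto)
  ultimately have "linear p" by (rule linearI)
  then have "matrix p *v x = p x" for x by (simp add: matrix_works)
  then show ?thesis using p by metis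
qed

lemma proj_mat_spec:
  fixes S :: "(real^'n) set"
  assumes S: "subspace S"
  shows "proj_mat S *v x \<in> S \<and> (\<forall>y\<in>S. (x - proj_mat S *v x) \<bullet> y = 0)"
proof -
  have unique: "\<exists>!P::real^'n^'n. \<forall>x. P *v x \<in> S \<and> (\<forall>y\<in>S. (x - P *v x) \<bullet> y = 0)"
  proof (rule ex_ex1I)
    show "\<exists>P::real^'n^'n. \<forall>x. P *v x \<in> S \<and> (\<forall>y\<in>S. (x - P *v x) \<bullet> y = 0)"
      by (rule orthogonal_projection_matrix_exists[OF S])
  next
    fix P Q :: "real^'n^'n"
    assume "\<forall>x. P *v x \<in> S \<and> (\<forall>y\<in>S. (x - P *v x) \<bullet> y = 0)"
      and "\<forall>x. Q *v x \<in> S \<and> (\<forall>y\<in>S. (x - Q *v x) \<bullet> y = 0)"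
    then show "P = Q" unfolding matrix_eq using orthogonal_projection_unique[OF S] by blast
  qed
  show ?thesis using theI'[OF unique] unfolding proj_mat_def by blast
qed

locale subspace_proj =
  fixes S :: "(real^'n) set"
  assumes subspace: "subspace S"
begin

abbreviation P :: "real^'n^'n" where "P \<equiv> proj_mat S"

lemma proj_in: "P *v x \<in> S"
  using proj_mat_spec[OF subspace] by blast

lemma proj_residual_orthogonal: "y \<in> S \<Longrightarrow> (x - P *v x) \<bullet> y = 0"
  using proj_mat_spec[OF subspace] by blast

lemma proj_fixes: "x \<in> S \<Longrightarrow> P *v x = x"
  using orthogonal_projection_unique[OF subspace proj_in, of x x] proj_residual_orthogonal[of _ x]
  by simp

lemma inner_proj_commute: "x \<bullet> (P *v y) = (P *v x) \<bullet> y"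
proof -
  have "x \<bullet> (P *v y) = (P *v x) \<bullet> (P *v y)"
    using proj_residual_orthogonal[OF proj_in[of y], of x] by (simp add: inner_diff_left)
  also have "\<dots> = (P *v x) \<bullet> y"
    using proj_residual_orthogonal[OF proj_in[of x], of y]
    by (simp add: inner_diff_left inner_diff_right inner_commute)
  finally show ?thesis .
qed

lemma transpose_proj: "transpose P = P"
  unfolding matrix_eq
  by (metis inner_proj_commute vector_eq_rdot dot_lmul_matrix transpose_matrix_vector)

lemma proj_idem: "P ** P = P"
  unfolding matrix_eq by (simp add: matrix_vector_mul_assoc[symmetric] proj_fixes proj_in)

lemma compression_add_outer:
  "P ** (C + t *\<^sub>R outer v) ** P = P ** C ** P + t *\<^sub>R outer (P *v v)"
  unfolding matrix_eq
  by (simp add: matrix_vector_mul_assoc[symmetric] matrix_vector_mult_add_rdistrib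
      matrix_vector_right_distrib scaleR_matrix_vector_assoc[symmetric] outer_mult_vec
      matrix_vector_mult_scaleR inner_proj_commute)

end

section \<open>The smallest eigenvalue of a compression\<close>

lemma nonneg_quadratic_imp_linear_coeff_zero:
  fixes g Q :: real
  assumes Q: "Q \<ge> 0" and nonneg: "\<And>s. 0 \<le> 2 * s * g + s\<^sup>2 * Q"
  shows "g = 0"
proof -
  define s where "s = - g / (Q + 1)"
  have "0 \<le> (2 * s * g + s\<^sup>2 * Q) * (Q + 1)\<^sup>2" using nonneg by simp
  also have "\<dots> = 2 * g * (s * (Q + 1)) * (Q + 1) + (s * (Q + 1))\<^sup>2 * Q"
    by (simp add: algebra_simps power2_eq_square)
  also have "s * (Q + 1) = - g" using Q unfolding s_def by simp
  finally have "0 \<le> - (g\<^sup>2 * Q) - 2 * g\<^sup>2" by (simp add: algebra_simps power2_eq_square)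
  moreover have "g\<^sup>2 * Q \<ge> 0" using Q by simp
  ultimately have "g\<^sup>2 \<le> 0" by linarith
  then show ?thesis by simp
qed

context subspace_proj
begin

lemma compr_eigenvalue_rayleigh:
  assumes "x \<in> S" "P *v (C *v x) = m *\<^sub>R x"
  shows "m * (x \<bullet> x) = x \<bullet> (C *v x)"
proof -
  have "m * (x \<bullet> x) = x \<bullet> (P *v (C *v x))" using assms(2) by simp
  also have "\<dots> = (P *v x) \<bullet> (C *v x)" by (rule inner_proj_commute)
  finally show ?thesis using proj_fixes[OF assms(1)] by simp
qed

lemma compr_eigenvectors_orthogonal:
  assumes C: "transpose C = C"
    and x1: "x1 \<in> S" "P *v (C *v x1) = m1 *\<^sub>R x1"
    and x2: "x2 \<in> S" "P *v (C *v x2) = m2 *\<^sub>R x2" and "m1 \<noteq> m2"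
  shows "x1 \<bullet> x2 = 0"
proof -
  have "m2 * (x1 \<bullet> x2) = x1 \<bullet> (P *v (C *v x2))" using x2(2) by simp
  also have "\<dots> = x1 \<bullet> (C *v x2)" using inner_proj_commute proj_fixes[OF x1(1)] by simp
  also have "\<dots> = (C *v x1) \<bullet> x2" using symmetric_matrix_inner_commute[OF C] .
  also have "\<dots> = (P *v (C *v x1)) \<bullet> x2"
    using inner_proj_commute[of "C *v x1" x2] proj_fixes[OF x2(1)] by simp
  also have "\<dots> = m1 * (x1 \<bullet> x2)" using x1(2) by simp
  finally show ?thesis using \<open>m1 \<noteq> m2\<close> by simp
qed

lemma finite_compr_eigenvalues:
  assumes C: "transpose C = C"
  shows "finite (compr_eigenvalues S C)"
proof -
  let ?E = "compr_eigenvalues S C"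
  have "\<forall>m\<in>?E. \<exists>x. x \<in> S \<and> x \<noteq> 0 \<and> P *v (C *v x) = m *\<^sub>R x"
    unfolding compr_eigenvalues_def by blast
  then obtain f where f: "\<And>m. m \<in> ?E \<Longrightarrow> f m \<in> S \<and> f m \<noteq> 0 \<and> P *v (C *v f m) = m *\<^sub>R f m"
    using bchoice by metis
  have orth: "f m1 \<bullet> f m2 = 0" if "m1 \<in> ?E" "m2 \<in> ?E" "m1 \<noteq> m2" for m1 m2
    using compr_eigenvectors_orthogonal[OF C] f that by blast
  have "inj_on f ?E"
  proof (rule inj_onI, rule ccontr)
    fix m1 m2 assume "m1 \<in> ?E" "m2 \<in> ?E" "f m1 = f m2" "m1 \<noteq> m2"
    then show False using orth[of m1 m2] f[of m1] by simp
  qed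
  moreover have "independent (f ` ?E)"
  proof (rule pairwise_orthogonal_independent)
    show "pairwise orthogonal (f ` ?E)"
      unfolding pairwise_def orthogonal_def using orth by fastforce
    show "0 \<notin> f ` ?E" using f by fastforce
  qed
  ultimately show ?thesis using independent_imp_finite finite_imageD by blast
qed

lemma rayleigh_minimizer_exists:
  assumes "S \<noteq> {0}"
  shows "\<exists>x0\<in>S. x0 \<bullet> x0 = 1 \<and> (\<forall>z\<in>S. (x0 \<bullet> (C *v x0)) * (z \<bullet> z) \<le> z \<bullet> (C *v z))"
proof -
  let ?K = "S \<inter> sphere 0 1"
  let ?f = "\<lambda>x. x \<bullet> (C *v x)"
  have unit: "(1 / norm y) *\<^sub>R y \<in> ?K" if "y \<in> S" "y \<noteq> 0" for y
    using that subspace_scale[OF subspace] by simp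
  obtain y where "y \<in> S" "y \<noteq> 0" using assms subspace_0[OF subspace] by blast
  then have "?K \<noteq> {}" using unit by blast
  moreover have "compact ?K" using closed_subspace[OF subspace] by (intro closed_Int_compact compact_sphere)
  moreover have "continuous_on ?K ?f"
    by (intro continuous_intros linear_continuous_on matrix_vector_mul_bounded_linear)
  ultimately obtain x0 where x0: "x0 \<in> ?K" "\<And>y. y \<in> ?K \<Longrightarrow> ?f x0 \<le> ?f y"
    using continuous_attains_inf[of ?K ?f] by blast
  have "?f x0 * (z \<bullet> z) \<le> ?f z" if z: "z \<in> S" for z
  proof (cases "z = 0")
    case False
    have "?f x0 \<le> ?f ((1 / norm z) *\<^sub>R z)" by (rule x0(2)[OF unit[OF z False]])
    also have "\<dots> = (1 / norm z) * ((1 / norm z) * ?f z)"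
      by (simp only: matrix_vector_mult_scaleR inner_scaleR_left inner_scaleR_right)
    also have "\<dots> = ?f z / (norm z)\<^sup>2" by (simp add: power2_eq_square)
    finally show ?thesis using False by (simp add: le_divide_eq dot_square_norm)
  qed simp
  moreover have "x0 \<in> S" "x0 \<bullet> x0 = 1" using x0(1) by (auto simp: dot_square_norm)
  ultimately show ?thesis by (intro bexI[of _ x0] conjI ballI)
qed

lemma rayleigh_minimizer_compr_eigenvector:
  assumes C: "transpose C = C" and x0: "x0 \<in> S" and m: "x0 \<bullet> (C *v x0) = m * (x0 \<bullet> x0)"
    and min: "\<forall>z\<in>S. m * (z \<bullet> z) \<le> z \<bullet> (C *v z)"
  shows "P *v (C *v x0) = m *\<^sub>R x0"
proof -
  define r where "r = C *v x0 - m *\<^sub>R x0"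
  have r_orth: "z \<bullet> r = 0" if z: "z \<in> S" for z
  proof (rule nonneg_quadratic_imp_linear_coeff_zero)
    show "0 \<le> z \<bullet> (C *v z) - m * (z \<bullet> z)" using min z by simp
    fix s
    have "x0 + s *\<^sub>R z \<in> S" using x0 z subspace by (simp add: subspace_add subspace_scale)
    then have "0 \<le> (x0 + s *\<^sub>R z) \<bullet> (C *v (x0 + s *\<^sub>R z)) - m * ((x0 + s *\<^sub>R z) \<bullet> (x0 + s *\<^sub>R z))"
      using min by simp
    also have "\<dots> = 2 * s * (z \<bullet> r) + s\<^sup>2 * (z \<bullet> (C *v z) - m * (z \<bullet> z))"
    proof -
      have "x0 \<bullet> (C *v z) = z \<bullet> (C *v x0)"
        using symmetric_matrix_inner_commute[OF C, of x0 z] by (simp add: inner_commute)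
      then have e1: "(x0 + s *\<^sub>R z) \<bullet> (C *v (x0 + s *\<^sub>R z))
                   = x0 \<bullet> (C *v x0) + 2 * s * (z \<bullet> (C *v x0)) + s\<^sup>2 * (z \<bullet> (C *v z))"
        by (simp add: matrix_vector_right_distrib matrix_vector_mult_scaleR inner_add_left
            inner_add_right power2_eq_square algebra_simps)
      have e2: "(x0 + s *\<^sub>R z) \<bullet> (x0 + s *\<^sub>R z) = x0 \<bullet> x0 + 2 * s * (z \<bullet> x0) + s\<^sup>2 * (z \<bullet> z)"
        by (simp add: inner_add_left inner_add_right inner_commute[of x0 z] power2_eq_square
            algebra_simps)
      have e3: "z \<bullet> r = z \<bullet> (C *v x0) - m * (z \<bullet> x0)" by (simp add: r_def inner_diff_right)
      show ?thesis unfolding e1 e2 e3 m by (simp add: algebra_simps)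
    qed
    finally show "0 \<le> 2 * s * (z \<bullet> r) + s\<^sup>2 * (z \<bullet> (C *v z) - m * (z \<bullet> z))" .
  qed
  have "(P *v r) \<bullet> (P *v r) = 0"
    using inner_proj_commute[of "P *v r" r] r_orth[OF proj_in] proj_fixes[OF proj_in] by simp
  then have "P *v r = 0" by simp
  then show ?thesis using proj_fixes[OF x0]
    by (simp add: r_def matrix_vector_mult_diff_distrib matrix_vector_mult_scaleR)
qed

lemma compr_eigenvalue_minimal:
  assumes C: "transpose C = C" and "S \<noteq> {0}"
  shows "\<exists>m\<in>compr_eigenvalues S C. \<forall>z\<in>S. m * (z \<bullet> z) \<le> z \<bullet> (C *v z)"
proof -
  obtain x0 where x0: "x0 \<in> S" "x0 \<bullet> x0 = 1"
    and min: "\<forall>z\<in>S. (x0 \<bullet> (C *v x0)) * (z \<bullet> z) \<le> z \<bullet> (C *v z)"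
    using rayleigh_minimizer_exists[OF \<open>S \<noteq> {0}\<close>] by blast
  then have "P *v (C *v x0) = (x0 \<bullet> (C *v x0)) *\<^sub>R x0"
    by (intro rayleigh_minimizer_compr_eigenvector[OF C]) simp_all
  moreover have "x0 \<noteq> 0" using x0(2) by auto
  ultimately show ?thesis using x0(1) min unfolding compr_eigenvalues_def by blast
qed

lemma lambda_min_restr_in:
  assumes "transpose C = C" "S \<noteq> {0}"
  shows "lambda_min_restr S C \<in> compr_eigenvalues S C"
  unfolding lambda_min_restr_def
  using finite_compr_eigenvalues compr_eigenvalue_minimal assms by (intro Min_in) blast+

lemma lambda_min_restr_rayleigh:
  assumes C: "transpose C = C" and x: "x \<in> S"
  shows "lambda_min_restr S C * (x \<bullet> x) \<le> x \<bullet> (C *v x)"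
proof (cases "S = {0}")
  case False
  then obtain m where m: "m \<in> compr_eigenvalues S C" "\<forall>z\<in>S. m * (z \<bullet> z) \<le> z \<bullet> (C *v z)"
    using compr_eigenvalue_minimal[OF C] by blast
  have "lambda_min_restr S C \<le> m"
    unfolding lambda_min_restr_def using finite_compr_eigenvalues[OF C] m(1) by (rule Min_le)
  then have "lambda_min_restr S C * (x \<bullet> x) \<le> m * (x \<bullet> x)" by (simp add: mult_right_mono)
  then show ?thesis using m(2) x by fastforce
qed (use x in simp)

lemma lambda_min_restr_mono:
  assumes B: "transpose B = B" "transpose B' = B'" and le: "\<forall>x\<in>S. x \<bullet> (B *v x) \<le> x \<bullet> (B' *v x)"
  shows "lambda_min_restr S B \<le> lambda_min_restr S B'"
proof (cases "S = {0}")
  case True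
  then show ?thesis by (simp add: lambda_min_restr_def compr_eigenvalues_def)
next
  case False
  obtain x where x: "x \<in> S" "x \<noteq> 0" "P *v (B' *v x) = lambda_min_restr S B' *\<^sub>R x"
    using lambda_min_restr_in[OF B(2) False] unfolding compr_eigenvalues_def by blast
  have "lambda_min_restr S B * (x \<bullet> x) \<le> lambda_min_restr S B' * (x \<bullet> x)"
    using lambda_min_restr_rayleigh[OF B(1) x(1)] le x(1) compr_eigenvalue_rayleigh[OF x(1,3)]
    by fastforce
  then show ?thesis using x(2) by simp
qed

lemma lambda_min_restr_add_outer:
  assumes B: "transpose B = B" and t: "t \<ge> 0"
  shows "lambda_min_restr S B \<le> lambda_min_restr S (B + t *\<^sub>R outer v)"
proof (rule lambda_min_restr_mono[OF B])
  show "transpose (B + t *\<^sub>R outer v) = B + t *\<^sub>R outer v"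
    using B by (simp add: transpose_add transpose_scalar transpose_outer)
  have "x \<bullet> ((B + t *\<^sub>R outer v) *v x) = x \<bullet> (B *v x) + t * (v \<bullet> x)\<^sup>2" for x
    by (simp add: matrix_vector_mult_add_rdistrib scaleR_matrix_vector_assoc[symmetric]
        outer_mult_vec inner_add_right inner_commute power2_eq_square)
  then show "\<forall>x\<in>S. x \<bullet> (B *v x) \<le> x \<bullet> ((B + t *\<^sub>R outer v) *v x)" using t by simp
qed

lemma shifted_form_pos:
  assumes B: "transpose B = B" and l: "l < lambda_min_restr S B" and x: "x \<in> S" "x \<noteq> 0"
  shows "0 < x \<bullet> ((B - l *\<^sub>R mat 1) *v x)"
proof -
  have "0 < (lambda_min_restr S B - l) * (x \<bullet> x)" using l x(2) by simp
  also have "\<dots> \<le> x \<bullet> ((B - l *\<^sub>R mat 1) *v x)"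
    using lambda_min_restr_rayleigh[OF B x(1)]
    by (simp add: matrix_vector_mult_diff_rdistrib inner_diff_right algebra_simps
        scaleR_matrix_vector_assoc[symmetric])
  finally show ?thesis .
qed

end

section \<open>The pseudoinverse of a positive definite compression\<close>

context subspace_proj
begin

text \<open>On \<open>S\<close> the matrix \<open>P C P + (I - P)\<close> acts as \<open>P C P\<close>, on \<open>S\<^sup>\<bottom>\<close> as the identity.\<close>

lemma compression_plus_complement_invertible:
  assumes pd: "\<forall>x\<in>S. x \<noteq> 0 \<longrightarrow> 0 < x \<bullet> (C *v x)"
  shows "invertible (P ** C ** P + (mat 1 - P))"
proof -
  let ?A = "P ** C ** P"
  have "x = 0" if "(?A + (mat 1 - P)) *v x = 0" for x
  proof -
    have Ax: "?A *v x = P *v (C *v (P *v x))" by (simp add: matrix_vector_mul_assoc matrix_mul_assoc)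
    have sum: "?A *v x + (x - P *v x) = 0" using that
      by (simp add: matrix_vector_mult_add_rdistrib matrix_vector_mult_diff_rdistrib)
    have "(?A *v x) \<bullet> (?A *v x) = (?A *v x) \<bullet> (?A *v x + (x - P *v x))"
      using proj_residual_orthogonal[OF proj_in, of x "C *v (P *v x)"] Ax
      by (simp add: inner_add_right inner_commute)
    then have "?A *v x = 0" using sum by simp
    then have Px: "P *v x = x" using sum by simp
    then have "x \<bullet> (C *v x) = x \<bullet> (?A *v x)" using Ax inner_proj_commute by metis
    then show "x = 0" using pd proj_in[of x] Px \<open>?A *v x = 0\<close> by fastforce
  qed
  then obtain F where "F ** (?A + (mat 1 - P)) = mat 1"
    using matrix_left_invertible_ker by blast
  then show ?thesis unfolding invertible_def using matrix_left_right_inverse by blast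
qed

lemma compression_pinv:
  assumes C: "transpose C = C" and pd: "\<forall>x\<in>S. x \<noteq> 0 \<longrightarrow> 0 < x \<bullet> (C *v x)"
  shows "P ** C ** P ** pinv (P ** C ** P) = P" and "pinv (P ** C ** P) ** (P ** C ** P) = P"
    and "P ** pinv (P ** C ** P) = pinv (P ** C ** P)"
    and "transpose (pinv (P ** C ** P)) = pinv (P ** C ** P)"
proof -
  define A where "A = P ** C ** P"
  define Q where "Q = mat 1 - P"
  obtain F where FE: "F ** (A + Q) = mat 1" and EF: "(A + Q) ** F = mat 1"
    using compression_plus_complement_invertible[OF pd] unfolding invertible_def A_def Q_def by blast
  have AQ: "A ** Q = 0" and QA: "Q ** A = 0" and PQ: "P ** Q = 0" and QQ: "Q ** Q = Q"
    unfolding A_def Q_def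
    by (simp_all add: matrix_diff_ldistrib matrix_diff_rdistrib matrix_mul_assoc proj_idem)
      (simp_all add: matrix_mul_assoc[symmetric] proj_idem)
  have FQ: "F ** Q = Q" and QF: "Q ** F = Q"
    using FE EF AQ QA QQ
    by (metis add_0 matrix_add_ldistrib matrix_add_rdistrib matrix_mul_assoc matrix_mul_lid
        matrix_mul_rid)+
  have P: "P = mat 1 - Q" unfolding Q_def by simp
  have AF: "A ** F = P" using EF QF unfolding P by (simp add: matrix_add_rdistrib eq_diff_eq)
  have FA: "F ** A = P" using FE FQ unfolding P by (simp add: matrix_add_ldistrib eq_diff_eq)
  define M where "M = F - Q"
  have AM: "A ** M = P" and MA: "M ** A = P"
    unfolding M_def by (simp_all add: matrix_diff_ldistrib matrix_diff_rdistrib AF FA AQ QA)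
  have PM: "P ** M = M"
    unfolding M_def using PQ QF by (simp add: matrix_diff_ldistrib P matrix_diff_rdistrib)
  have PA: "P ** A = A" unfolding A_def by (simp add: matrix_mul_assoc proj_idem)
  have symA: "transpose A = A"
    unfolding A_def using C by (simp add: matrix_mul_assoc matrix_transpose_mul transpose_proj)
  have "pinv A = M" by (rule pinv_eq_inverse_on_range[OF AM MA PA PM transpose_proj])
  then show "P ** C ** P ** pinv (P ** C ** P) = P" "pinv (P ** C ** P) ** (P ** C ** P) = P"
    "P ** pinv (P ** C ** P) = pinv (P ** C ** P)"
    "transpose (pinv (P ** C ** P)) = pinv (P ** C ** P)"
    using AM MA PM transpose_inverse_on_range[OF symA transpose_proj AM PM] unfolding A_def
    by simp_all
qed

lemma compression_pinv_nonneg: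
  assumes C: "transpose C = C" and pd: "\<forall>x\<in>S. x \<noteq> 0 \<longrightarrow> 0 < x \<bullet> (C *v x)"
  shows "0 \<le> x \<bullet> (pinv (P ** C ** P) *v x)"
proof -
  define z where "z = pinv (P ** C ** P) *v x"
  have Pz: "P *v z = z" using compression_pinv(3)[OF C pd]
    by (metis z_def matrix_vector_mul_assoc)
  have "P *v x = P *v (C *v z)"
    using compression_pinv(1)[OF C pd] Pz
    by (metis z_def matrix_vector_mul_assoc)
  then have "x \<bullet> z = z \<bullet> (C *v z)"
    using inner_proj_commute Pz by (metis inner_commute)
  then show ?thesis using pd proj_in[of z] Pz z_def
    by (cases "z = 0") (auto intro: less_imp_le)
qed

lemma lower_pot_rank_one_update:
  assumes B: "transpose B = B" and pd: "\<forall>x\<in>S. x \<noteq> 0 \<longrightarrow> 0 < x \<bullet> ((B - l *\<^sub>R mat 1) *v x)"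
    and t: "t \<ge> 0"
  defines "M \<equiv> pinv (P ** (B - l *\<^sub>R mat 1) ** P)"
  shows "lower_pot S l (B + t *\<^sub>R outer v)
           = lower_pot S l B - t / (1 + t * (v \<bullet> (M *v v))) * ((M *v v) \<bullet> (M *v v))"
proof -
  define C where "C = B - l *\<^sub>R mat 1"
  define w where "w = P *v v"
  have C: "transpose C = C" using B by (simp add: C_def transpose_diff transpose_scalar transpose_mat)
  have M: "M = pinv (P ** C ** P)" unfolding M_def C_def ..
  note pinvC = compression_pinv[OF C pd[folded C_def], folded M]
  have "M ** P = M"
    using arg_cong[OF pinvC(3), of transpose] pinvC(4) by (simp add: matrix_transpose_mul transpose_proj)
  then have Mv: "M *v v = M *v w" by (simp add: w_def matrix_vector_mul_assoc)
  have "P *v (M *v w) = M *v w" using pinvC(3) by (simp add: matrix_vector_mul_assoc)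
  then have vMw: "v \<bullet> (M *v w) = w \<bullet> (M *v w)" using inner_proj_commute[of v "M *v w"] w_def
    by simp
  have "0 \<le> t * (w \<bullet> (M *v w))"
    using t compression_pinv_nonneg[OF C pd[folded C_def], folded M] by simp
  then have nonsing: "1 + t * (w \<bullet> (M *v w)) \<noteq> 0" by linarith
  have symA: "transpose (P ** C ** P) = P ** C ** P"
    using C by (simp add: matrix_mul_assoc matrix_transpose_mul transpose_proj)
  have PA: "P ** (P ** C ** P) = P ** C ** P" by (simp add: matrix_mul_assoc proj_idem)
  have Pw: "P *v w = w" using proj_fixes proj_in w_def by simp
  have "P ** (B + t *\<^sub>R outer v - l *\<^sub>R mat 1) ** P = P ** C ** P + t *\<^sub>R outer w"
    using compression_add_outer[of C t v] by (simp add: C_def w_def algebra_simps)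
  then have "lower_pot S l (B + t *\<^sub>R outer v)
      = trace (M - (t / (1 + t * (w \<bullet> (M *v w)))) *\<^sub>R outer (M *v w))"
    unfolding lower_pot_def
    by (simp add: pinv_rank_one_update[OF symA pinvC(4,1,2) PA pinvC(3) transpose_proj Pw nonsing])
  moreover have "trace M = lower_pot S l B" unfolding M_def lower_pot_def ..
  ultimately show ?thesis by (simp add: Mv vMw trace_sub trace_scaleR trace_outer)
qed

end

lemma le_decrement_if_barrier:
  fixes a b t D :: real
  assumes a: "a \<ge> 0" and b: "b \<ge> 0" and t: "t > 0" and barrier: "1 / t \<le> (1 / D) * a - b"
  shows "D \<le> t / (1 + t * b) * a"
proof (cases "D \<le> 0")
  case True
  have "0 \<le> t / (1 + t * b) * a" using a b t by simp
  then show ?thesis using True by linarith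
next
  case False
  then have "D * (1 / t + b) \<le> a" using barrier by (simp add: field_simps)
  then have "D * (1 + t * b) \<le> t * a"
    using mult_left_mono[of _ _ t] t by (simp add: field_simps)
  moreover have "1 + t * b > 0" using b t by (simp add: add_pos_nonneg)
  ultimately show ?thesis by (simp add: le_divide_eq mult.commute)
qed

theorem lemma3p11:
  fixes S :: "(real^'n) set" and k :: nat and B :: "real^'n^'n"
    and l \<delta>L t :: real and v :: "real^'n"
  assumes "subspace S" and "dim S = k"
    and "transpose B = B"
    and "\<delta>L > 0" and "t > 0"
    and "lambda_min_restr S B > l + \<delta>L"
    and "(let M = pinv (proj_mat S ** (B - (l + \<delta>L) *\<^sub>R mat 1) ** proj_mat S);
              L = (1 / (lower_pot S (l + \<delta>L) B - lower_pot S l B)) *\<^sub>R (M ** M) - M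
          in L \<bullet>\<^sub>F outer v \<ge> 1 / t)"
  shows "lower_pot S (l + \<delta>L) (B + t *\<^sub>R outer v) \<le> lower_pot S l B \<and>
         lambda_min_restr S (B + t *\<^sub>R outer v) > l + \<delta>L"
proof -
  interpret subspace_proj S by unfold_locales (fact assms(1))
  define l' where "l' = l + \<delta>L"
  define M where "M = pinv (P ** (B - l' *\<^sub>R mat 1) ** P)"
  define D where "D = lower_pot S l' B - lower_pot S l B"
  have pd: "\<forall>x\<in>S. x \<noteq> 0 \<longrightarrow> 0 < x \<bullet> ((B - l' *\<^sub>R mat 1) *v x)"
    using shifted_form_pos[OF assms(3)] assms(6) l'_def by simp
  have C: "transpose (B - l' *\<^sub>R mat 1) = B - l' *\<^sub>R mat 1"
    using assms(3) by (simp add: transpose_diff transpose_scalar transpose_mat)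
  have "1 / t \<le> (1 / D) * ((M *v v) \<bullet> (M *v v)) - v \<bullet> (M *v v)"
    using assms(7) frob_barrier_outer[OF compression_pinv(4)[OF C pd]]
    unfolding Let_def M_def D_def l'_def by simp
  then have "D \<le> t / (1 + t * (v \<bullet> (M *v v))) * ((M *v v) \<bullet> (M *v v))"
    using le_decrement_if_barrier inner_ge_zero compression_pinv_nonneg[OF C pd] assms(5)
    unfolding M_def by blast
  then have "lower_pot S l' (B + t *\<^sub>R outer v) \<le> lower_pot S l B"
    using lower_pot_rank_one_update[OF assms(3) pd, of t v] assms(5)
    unfolding M_def D_def by simp
  moreover have "lambda_min_restr S B \<le> lambda_min_restr S (B + t *\<^sub>R outer v)"
    using lambda_min_restr_add_outer[OF assms(3)] assms(5) by simp
  ultimately show ?thesis using assms(6) l'_def by simp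
qed

end
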